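(* Let $(X,\mathcal{B},\mu)$ be a standard probability space and $r\geq2$ an integer. A subset $K$ of $\mathfrak{P}_r$ is precompact in $(\mathfrak{P}_r,\rho)$ if and only if $h^*_\mu(K)=0$.
   Context: $\mathfrak{P}_r$ is the set of finite measurable partitions of $X$ with at most $r$ atoms (finite collections of pairwise disjoint measurable sets covering $X$ mod $\mu$, identified mod $0$). $H_\mu(\alpha)=-\sum_{A\in\alpha}\mu(A)\log\mu(A)$; $H_\mu(\alpha|\beta)=\sum_{B\in\beta}\mu(B)\sum_{A\in\alpha}-\mu(A|B)\log\mu(A|B)$ with $\mu(A|B)=\mu(A\cap B)/\mu(B)$ ($0$ if $\mu(B)=0$), $0\log0=0$. Rokhlin metric: $\rho(\alpha,\beta)=H_\mu(\alpha|\beta)+H_\mu(\beta|\alpha)$. Maximal pattern entropy: $h^*_\mu(K)=\limsup_{n}\frac1n\sup_{\alpha_1,\dots,\alpha_n\in K}H_\mu(\bigvee_{i=1}^n\alpha_i)$, where $\alpha\vee\beta=\{A\cap B\}$. *)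

theory Defs
  imports "HOL-Probability.Probability"
begin

text \<open>Every partition mod 0 has such a representative, and all
  quantities below (entropy, Rokhlin distance, pattern entropy) are invariant under
  modification by null sets, so this is a faithful set of representatives.\<close>

definition partitions_le :: "'a measure \<Rightarrow> nat \<Rightarrow> 'a set set set" where
  "partitions_le M r = {\<alpha>. finite \<alpha> \<and> card \<alpha> \<le> r \<and> \<alpha> \<subseteq> sets M \<and>
      disjoint \<alpha> \<and> \<Union>\<alpha> = space M}"

definition eta :: "real \<Rightarrow> real" where
  "eta x = (if x = 0 then 0 else - x * ln x)"

definition part_entropy :: "'a measure \<Rightarrow> 'a set set \<Rightarrow> real" where
  "part_entropy M \<alpha> = (\<Sum>A\<in>\<alpha>. eta (measure M A))"

text \<open>Conditional entropy; note that real division by 0 yields 0, matching the convention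
  mu(A|B) = 0 if mu(B) = 0.\<close>
definition cond_entropy :: "'a measure \<Rightarrow> 'a set set \<Rightarrow> 'a set set \<Rightarrow> real" where
  "cond_entropy M \<alpha> \<beta> =
     (\<Sum>B\<in>\<beta>. measure M B * (\<Sum>A\<in>\<alpha>. eta (measure M (A \<inter> B) / measure M B)))"

definition rokhlin_dist :: "'a measure \<Rightarrow> 'a set set \<Rightarrow> 'a set set \<Rightarrow> real" where
  "rokhlin_dist M \<alpha> \<beta> = cond_entropy M \<alpha> \<beta> + cond_entropy M \<beta> \<alpha>"

definition join_n :: "'a measure \<Rightarrow> (nat \<Rightarrow> 'a set set) \<Rightarrow> nat \<Rightarrow> 'a set set" where
  "join_n M as n = {space M \<inter> (\<Inter>i<n. f i) | f. \<forall>i<n. f i \<in> as i}"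

text \<open>sup over alpha_1..alpha_n in K of H(join); taken in ennreal (entropies are
  nonnegative), so that the supremum over an empty family is 0.\<close>
definition pattern_sup :: "'a measure \<Rightarrow> 'a set set set \<Rightarrow> nat \<Rightarrow> ennreal" where
  "pattern_sup M K n = (SUP as \<in> {as. \<forall>i<n. as i \<in> K}. ennreal (part_entropy M (join_n M as n)))"

definition max_pattern_entropy :: "'a measure \<Rightarrow> 'a set set set \<Rightarrow> ennreal" where
  "max_pattern_entropy M K = limsup (\<lambda>n. pattern_sup M K n / of_nat n)"

text \<open>Precompactness (total boundedness) of K with respect to the Rokhlin (pseudo)metric;
  since the pseudometric is identified mod 0 this is precompactness in the quotient metric
  space.\<close>
definition rokhlin_precompact :: "'a measure \<Rightarrow> 'a set set set \<Rightarrow> bool" where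
  "rokhlin_precompact M K \<longleftrightarrow>
     (\<forall>\<epsilon>>0. \<exists>F. finite F \<and> F \<subseteq> K \<and> (\<forall>\<alpha>\<in>K. \<exists>\<beta>\<in>F. rokhlin_dist M \<alpha> \<beta> < \<epsilon>))"

end

theory Submission
  imports Defs
begin

(*
  If K is covered by finitely many Rokhlin balls of radius e around b_1, ..., b_k and Z is the
  join of the b_j, then submodularity of entropy gives
    H(a_1 v ... v a_n) <= H(Z) + sum_i H(a_i | b_i) <= H(Z) + n e
  whenever each a_i lies in the ball around b_i, so the pattern entropy is at most e.

  Conversely, if K is not precompact there is c > 0 such that every finite partition Q admits
  some a in K with H(a | Q) >= c.  Otherwise every a in K is determined, up to a set of measure
  at most H(a | Q), by the map sending each atom of Q to the atom of a that carries most of its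
  mass; partitions whose maps induce the same equivalence relation on Q are Rokhlin close, and
  there are only finitely many such relations.  Choosing a_(n+1) greedily with
  H(a_(n+1) | a_1 v ... v a_n) >= c then gives H(a_1 v ... v a_n) >= n c.
*)

section \<open>Finite measurable partitions\<close>

definition measurable_partition :: "'a measure \<Rightarrow> 'a set set \<Rightarrow> bool" where
  "measurable_partition M P \<longleftrightarrow> finite P \<and> P \<subseteq> sets M \<and> disjoint P \<and> \<Union>P = space M"

definition part_join :: "'a set set \<Rightarrow> 'a set set \<Rightarrow> 'a set set" where
  "part_join P Q = {A \<inter> B | A B. A \<in> P \<and> B \<in> Q}"

definition refines :: "'a set set \<Rightarrow> 'a set set \<Rightarrow> bool" where
  "refines Z B \<longleftrightarrow> (\<forall>S\<in>Z. \<exists>C\<in>B. S \<subseteq> C)"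

definition atom_of :: "'a set set \<Rightarrow> 'a \<Rightarrow> 'a set" where
  "atom_of P x = (THE A. A \<in> P \<and> x \<in> A)"

lemma measurable_partitionD:
  assumes "measurable_partition M P"
  shows "finite P" "P \<subseteq> sets M" "\<Union>P = space M"
    "\<And>A B. A \<in> P \<Longrightarrow> B \<in> P \<Longrightarrow> A \<noteq> B \<Longrightarrow> A \<inter> B = {}"
  using assms unfolding measurable_partition_def disjoint_def disjnt_def by auto

lemma measurable_partition_subset_space:
  "measurable_partition M P \<Longrightarrow> A \<in> P \<Longrightarrow> A \<subseteq> space M"
  using measurable_partitionD(3) by blast

lemma partitions_leD:
  assumes "P \<in> partitions_le M r"
  shows "measurable_partition M P" "card P \<le> r"
  using assms unfolding partitions_le_def measurable_partition_def by auto

lemma measurable_partition_space: "measurable_partition M {space M}"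
  unfolding measurable_partition_def by auto

lemma part_join_image: "part_join P Q = (\<lambda>(A, B). A \<inter> B) ` (P \<times> Q)"
  unfolding part_join_def by auto

lemma part_join_commute: "part_join P Q = part_join Q P"
  unfolding part_join_def by blast

lemma finite_part_join: "finite P \<Longrightarrow> finite Q \<Longrightarrow> finite (part_join P Q)"
  unfolding part_join_image by simp

lemma measurable_partition_part_join:
  assumes P: "measurable_partition M P" and Q: "measurable_partition M Q"
  shows "measurable_partition M (part_join P Q)"
  unfolding measurable_partition_def
proof (intro conjI)
  note p = measurable_partitionD[OF P] and q = measurable_partitionD[OF Q]
  show "finite (part_join P Q)" using p(1) q(1) by (rule finite_part_join)
  show "part_join P Q \<subseteq> sets M" using p(2) q(2) unfolding part_join_def by blast
  show "disjoint (part_join P Q)"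
  proof (rule disjointI)
    fix S T assume "S \<in> part_join P Q" "T \<in> part_join P Q" "S \<noteq> T"
    then obtain A B A' B' where AB: "A \<in> P" "B \<in> Q" "A' \<in> P" "B' \<in> Q"
      and ST: "S = A \<inter> B" "T = A' \<inter> B'"
      unfolding part_join_def by blast
    then have "A \<noteq> A' \<or> B \<noteq> B'" using \<open>S \<noteq> T\<close> by blast
    then show "S \<inter> T = {}" unfolding ST using p(4)[OF AB(1,3)] q(4)[OF AB(2,4)] by blast
  qed
  show "\<Union>(part_join P Q) = space M"
  proof
    show "\<Union>(part_join P Q) \<subseteq> space M" using p(3) unfolding part_join_def by blast
    show "space M \<subseteq> \<Union>(part_join P Q)"
    proof
      fix x assume "x \<in> space M"
      then obtain A B where "A \<in> P" "x \<in> A" "B \<in> Q" "x \<in> B" using p(3) q(3) by blast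
      then show "x \<in> \<Union>(part_join P Q)" unfolding part_join_def by blast
    qed
  qed
qed

lemma refines_part_join: "refines Z B \<Longrightarrow> refines (part_join A Z) B"
  unfolding refines_def part_join_def by blast

lemma refines_space: "measurable_partition M Z \<Longrightarrow> refines Z {space M}"
  unfolding refines_def using measurable_partition_subset_space by blast

lemma atom_of_unique:
  assumes P: "measurable_partition M P" and A: "A \<in> P" "x \<in> A"
  shows "atom_of P x = A"
  unfolding atom_of_def
proof (rule the_equality)
  show "A \<in> P \<and> x \<in> A" using A by simp
  fix B assume B: "B \<in> P \<and> x \<in> B"
  show "B = A"
  proof (rule ccontr)
    assume "B \<noteq> A"
    then have "B \<inter> A = {}" using measurable_partitionD(4)[OF P] B A(1) by simp
    then show False using A(2) B by blast
  qed
qed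

lemma atom_of_mem:
  assumes "measurable_partition M P" "x \<in> space M"
  shows "atom_of P x \<in> P" "x \<in> atom_of P x"
proof -
  obtain A where A: "A \<in> P" "x \<in> A" using measurable_partitionD(3)[OF assms(1)] assms(2) by blast
  then have "atom_of P x = A" by (rule atom_of_unique[OF assms(1)])
  then show "atom_of P x \<in> P" "x \<in> atom_of P x" using A by simp_all
qed

lemma atom_of_image_subset:
  assumes "measurable_partition M P"
  shows "atom_of P ` space M \<subseteq> P"
  using atom_of_mem(1)[OF assms] by blast

lemma atom_of_vimage:
  assumes "measurable_partition M P" "A \<in> P"
  shows "atom_of P -` {A} \<inter> space M = A"
proof
  show "atom_of P -` {A} \<inter> space M \<subseteq> A" using atom_of_mem(2)[OF assms(1)] by blast
  show "A \<subseteq> atom_of P -` {A} \<inter> space M"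
    using atom_of_unique[OF assms] measurable_partition_subset_space[OF assms] by blast
qed

section \<open>Entropy and conditional entropy of partitions\<close>

lemma eta_eq: "eta x = - (x * ln x)"
  by (simp add: eta_def)

lemma eta_nonneg: "0 \<le> x \<Longrightarrow> x \<le> 1 \<Longrightarrow> 0 \<le> eta x"
  unfolding eta_eq by (cases "x = 0") (auto simp: mult_nonneg_nonpos)

(* The maximum of eta y - L * y is attained at y = exp (- L - 1). *)
lemma eta_le_linear:
  assumes "0 \<le> y"
  shows "eta y \<le> L * y + exp (- L - 1)"
proof (cases "y = 0")
  case False
  then have y: "0 < y" using assms by simp
  define z where "z = y * exp (L + 1)"
  have "0 < z" using y by (simp add: z_def)
  then have "1 - ln z \<le> 1 / z"
    using ln_le_minus_one[of "1 / z"] by (simp add: ln_div)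
  then have "y * (1 - ln z) \<le> y * (1 / z)" using y by (intro mult_left_mono) auto
  moreover have "y * (1 / z) = exp (- L - 1)"
  proof -
    have "exp (- L - 1) * exp (L + 1) = 1" by (simp flip: exp_add)
    then show ?thesis using y by (simp add: z_def field_simps)
  qed
  moreover have "eta y = L * y + y * (1 - ln z)"
    using y by (simp add: eta_eq z_def ln_mult algebra_simps)
  ultimately show ?thesis by simp
qed (simp add: eta_def)

lemma eta_le_one_minus:
  assumes "0 \<le> x"
  shows "eta x \<le> 1 - x"
proof (cases "x = 0")
  case False
  then have x: "0 < x" using assms by simp
  then have "- ln x \<le> 1 / x - 1"
    using ln_le_minus_one[of "1 / x"] by (simp add: ln_div)
  then have "x * (- ln x) \<le> x * (1 / x - 1)" using x by (intro mult_left_mono) auto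
  also have "x * (1 / x - 1) = 1 - x" using x by (simp add: field_simps)
  finally show ?thesis by (simp add: eta_eq)
qed (simp add: eta_def)

lemma sum_eta_rescale:
  fixes x :: "'b \<Rightarrow> real"
  assumes "finite I" "\<And>i. i \<in> I \<Longrightarrow> 0 \<le> x i" "(\<Sum>i\<in>I. x i) = m"
  shows "(\<Sum>i\<in>I. eta (x i)) = eta m + m * (\<Sum>i\<in>I. eta (x i / m))"
proof (cases "m = 0")
  case True
  then have "\<forall>i\<in>I. x i = 0" using assms sum_nonneg_eq_0_iff by blast
  then show ?thesis using True by (simp add: eta_def)
next
  case False
  have "0 \<le> m" using assms sum_nonneg by metis
  then have m: "0 < m" using False by simp
  have "m * eta (x i / m) = eta (x i) + x i * ln m" if "i \<in> I" for i
  proof (cases "x i = 0")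
    case False
    then have "0 < x i" using assms(2)[OF that] by simp
    then show ?thesis using m by (simp add: eta_eq ln_div field_simps)
  qed (simp add: eta_def)
  then have "m * (\<Sum>i\<in>I. eta (x i / m)) = (\<Sum>i\<in>I. eta (x i) + x i * ln m)"
    by (simp add: sum_distrib_left)
  also have "\<dots> = (\<Sum>i\<in>I. eta (x i)) + m * ln m"
    by (simp add: sum.distrib assms(3) flip: sum_distrib_right)
  finally show ?thesis by (simp add: eta_eq)
qed

lemma part_entropy_image:
  assumes "finite V" and disj: "\<And>v w. v \<in> V \<Longrightarrow> w \<in> V \<Longrightarrow> v \<noteq> w \<Longrightarrow> h v \<inter> h w = {}"
  shows "part_entropy M (h ` V) = (\<Sum>v\<in>V. eta (measure M (h v)))"
  unfolding part_entropy_def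
proof (subst sum.reindex_nontrivial[OF assms(1)])
  fix v w assume "v \<in> V" "w \<in> V" "v \<noteq> w" "h v = h w"
  then have "h v = {}" using disj[of v w] by auto
  then show "eta (measure M (h v)) = 0" by (simp add: eta_def)
qed (simp add: comp_def)

(* Joins may contain the empty set as an atom, which the entropy does not see. *)
lemma part_entropy_Diff_empty: "finite P \<Longrightarrow> part_entropy M (P - {{}}) = part_entropy M P"
  unfolding part_entropy_def by (intro sum.mono_neutral_left) (auto simp: eta_def)

lemma part_join_Diff_empty_if_refines:
  assumes B: "measurable_partition M B" and "refines S B"
  shows "part_join S B - {{}} = S - {{}}"
proof
  show "part_join S B - {{}} \<subseteq> S - {{}}"
  proof
    fix T assume "T \<in> part_join S B - {{}}"
    then obtain A C where T: "A \<in> S" "C \<in> B" "T = A \<inter> C" "T \<noteq> {}"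
      unfolding part_join_def by blast
    obtain C' where C': "C' \<in> B" "A \<subseteq> C'" using \<open>refines S B\<close> T(1) unfolding refines_def by blast
    then have "C = C'" using measurable_partitionD(4)[OF B T(2) C'(1)] T(3,4) by blast
    then show "T \<in> S - {{}}" using T C' by (simp add: Int_absorb2)
  qed
  show "S - {{}} \<subseteq> part_join S B - {{}}"
  proof
    fix A assume A: "A \<in> S - {{}}"
    then obtain C where "C \<in> B" "A \<subseteq> C" using \<open>refines S B\<close> unfolding refines_def by blast
    then have "A = A \<inter> C" "C \<in> B" by auto
    then show "A \<in> part_join S B - {{}}" using A unfolding part_join_def by blast
  qed
qed

lemma part_entropy_part_join_if_refines:
  assumes "measurable_partition M B" "finite S" "refines S B"
  shows "part_entropy M (part_join S B) = part_entropy M S"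
  using part_entropy_Diff_empty[of S M] part_entropy_Diff_empty[of "part_join S B" M]
    part_join_Diff_empty_if_refines[OF assms(1,3)] measurable_partitionD(1)[OF assms(1)] assms(2)
  by (simp add: finite_part_join)

context prob_space
begin

lemma measurable_partition_nonempty: "measurable_partition M P \<Longrightarrow> P \<noteq> {}"
  using measurable_partitionD(3) not_empty by force

lemma sum_measure_Int_partition:
  assumes P: "measurable_partition M P" and B: "B \<in> sets M"
  shows "(\<Sum>A\<in>P. measure M (A \<inter> B)) = measure M B"
proof -
  note p = measurable_partitionD[OF P]
  have "measure M (\<Union>A\<in>P. A \<inter> B) = (\<Sum>A\<in>P. measure M (A \<inter> B))"
  proof (rule finite_measure_finite_Union)
    show "disjoint_family_on (\<lambda>A. A \<inter> B) P"
      unfolding disjoint_family_on_def using p(4) by blast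
  qed (use p B in auto)
  moreover have "(\<Union>A\<in>P. A \<inter> B) = B" using p(3) sets.sets_into_space[OF B] by blast
  ultimately show ?thesis by simp
qed

lemma sum_measure_partition:
  assumes "measurable_partition M Q"
  shows "(\<Sum>G\<in>Q. measure M G) = 1"
proof -
  have "G \<inter> space M = G" if "G \<in> Q" for G
    using measurable_partition_subset_space[OF assms that] by blast
  then show ?thesis
    using sum_measure_Int_partition[OF assms sets.top] by (simp add: prob_space)
qed

lemma part_entropy_part_join_eq_sum:
  assumes P: "measurable_partition M P" and Q: "measurable_partition M Q"
  shows "part_entropy M (part_join P Q) = (\<Sum>B\<in>Q. \<Sum>A\<in>P. eta (measure M (A \<inter> B)))"
proof -
  note p = measurable_partitionD[OF P] and q = measurable_partitionD[OF Q]
  have "part_entropy M (part_join P Q) = (\<Sum>(A, B)\<in>P \<times> Q. eta (measure M (A \<inter> B)))"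
    unfolding part_join_image
  proof (subst part_entropy_image)
    show "finite (P \<times> Q)" using p(1) q(1) by simp
    fix v w assume "v \<in> P \<times> Q" "w \<in> P \<times> Q" "v \<noteq> w"
    then obtain A B A' B' where v: "v = (A, B)" "w = (A', B')" "A \<in> P" "B \<in> Q" "A' \<in> P" "B' \<in> Q"
      and "A \<noteq> A' \<or> B \<noteq> B'" by (cases v; cases w) auto
    then have "A \<inter> A' = {} \<or> B \<inter> B' = {}" using p(4) q(4) by metis
    then show "(case v of (A, B) \<Rightarrow> A \<inter> B) \<inter> (case w of (A, B) \<Rightarrow> A \<inter> B) = {}"
      using v by auto
  qed (simp add: case_prod_unfold)
  also have "\<dots> = (\<Sum>B\<in>Q. \<Sum>A\<in>P. eta (measure M (A \<inter> B)))"
    by (simp add: sum.cartesian_product sum.swap[of _ P] flip: sum.cartesian_product)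
  finally show ?thesis .
qed

lemma part_entropy_part_join:
  assumes P: "measurable_partition M P" and Q: "measurable_partition M Q"
  shows "part_entropy M (part_join P Q) = part_entropy M Q + cond_entropy M P Q"
proof -
  note p = measurable_partitionD[OF P] and q = measurable_partitionD[OF Q]
  have "(\<Sum>A\<in>P. eta (measure M (A \<inter> B))) =
      eta (measure M B) + measure M B * (\<Sum>A\<in>P. eta (measure M (A \<inter> B) / measure M B))"
    if "B \<in> Q" for B
    using p(1) sum_measure_Int_partition[OF P] q(2) that by (intro sum_eta_rescale) auto
  then show ?thesis
    unfolding part_entropy_part_join_eq_sum[OF P Q]
    unfolding part_entropy_def cond_entropy_def by (simp add: sum.distrib)
qed

lemma cond_entropy_nonneg:
  assumes Q: "measurable_partition M Q"
  shows "0 \<le> cond_entropy M P Q"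
  unfolding cond_entropy_def
proof (intro sum_nonneg mult_nonneg_nonneg)
  fix B A assume "B \<in> Q" "A \<in> P"
  have "measure M (A \<inter> B) \<le> measure M B"
    using measurable_partitionD(2)[OF Q] \<open>B \<in> Q\<close> by (intro finite_measure_mono) auto
  then show "0 \<le> eta (measure M (A \<inter> B) / measure M B)"
    by (intro eta_nonneg) (auto simp: divide_le_eq_1 less_le)
qed simp

lemma part_entropy_le_part_join:
  assumes "measurable_partition M P" "measurable_partition M Q"
  shows "part_entropy M Q \<le> part_entropy M (part_join P Q)"
  using part_entropy_part_join[OF assms] cond_entropy_nonneg[OF assms(2)] by simp

lemma cond_entropy_le_rokhlin_dist:
  assumes "measurable_partition M \<alpha>"
  shows "cond_entropy M \<alpha> \<beta> \<le> rokhlin_dist M \<alpha> \<beta>"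
  using cond_entropy_nonneg[OF assms, of \<beta>] unfolding rokhlin_dist_def by simp

end

section \<open>Submodularity of entropy\<close>

(*
  A partition P is identified with the simple random variable atom_of P; submodularity of
  partition entropy is then nonnegativity of the library's conditional mutual information.
*)
definition fibre_measure :: "'a measure \<Rightarrow> ('a \<Rightarrow> 'b) \<Rightarrow> 'b \<Rightarrow> real" where
  "fibre_measure M X v = measure M (X -` {v} \<inter> space M)"

definition simple_entropy :: "'a measure \<Rightarrow> ('a \<Rightarrow> 'b) \<Rightarrow> real" where
  "simple_entropy M X = (\<Sum>v\<in>X ` space M. eta (fibre_measure M X v))"

lemma mult_ln_div_mult_div:
  fixes p a b c :: real
  assumes "0 \<le> p" "p \<le> a" "p \<le> b" "p \<le> c"
  shows "p * ln (p / (a * (b / c))) = p * ln p - p * ln a - p * ln b + p * ln c"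
proof (cases "p = 0")
  case False
  then have "0 < p" using assms(1) by simp
  then show ?thesis using assms(2-4) by (simp add: ln_div ln_mult algebra_simps)
qed simp

context prob_space
begin

lemma simple_distributed_fibre_measure:
  "simple_function M X \<Longrightarrow> simple_distributed M X (fibre_measure M X)"
  unfolding fibre_measure_def by (rule simple_distributedI[OF _ measure_nonneg refl])

lemma sum_fibre_measure_comp:
  assumes W: "simple_function M W" and V: "\<And>x. x \<in> space M \<Longrightarrow> V x = \<pi> (W x)"
  shows "(\<Sum>t\<in>W ` space M. fibre_measure M W t * h (\<pi> t)) =
    (\<Sum>u\<in>V ` space M. fibre_measure M V u * h u)"
proof -
  have fin: "finite (W ` space M)" using simple_functionD(1)[OF W] .
  have img: "V ` space M = \<pi> ` W ` space M" using V by force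
  have fibre: "fibre_measure M V u = (\<Sum>t\<in>{t \<in> W ` space M. \<pi> t = u}. fibre_measure M W t)" for u
  proof -
    have "V -` {u} \<inter> space M = (\<Union>t\<in>{t \<in> W ` space M. \<pi> t = u}. W -` {t} \<inter> space M)"
      using V by auto
    moreover have "measure M (\<Union>t\<in>{t \<in> W ` space M. \<pi> t = u}. W -` {t} \<inter> space M) =
        (\<Sum>t\<in>{t \<in> W ` space M. \<pi> t = u}. measure M (W -` {t} \<inter> space M))"
      using fin simple_functionD(2)[OF W]
      by (intro finite_measure_finite_Union) (auto simp: disjoint_family_on_def)
    ultimately show ?thesis unfolding fibre_measure_def by simp
  qed
  have "(\<Sum>t\<in>W ` space M. fibre_measure M W t * h (\<pi> t)) =
      (\<Sum>u\<in>\<pi> ` W ` space M. \<Sum>t\<in>{t \<in> W ` space M. \<pi> t = u}. fibre_measure M W t * h (\<pi> t))"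
    by (rule sum.image_gen[OF fin])
  also have "\<dots> = (\<Sum>u\<in>V ` space M. fibre_measure M V u * h u)"
    unfolding img fibre sum_distrib_right by (intro sum.cong refl) auto
  finally show ?thesis .
qed

lemma sum_fibre_measure_ln_comp:
  assumes W: "simple_function M W" and V: "\<And>x. x \<in> space M \<Longrightarrow> V x = \<pi> (W x)"
  shows "(\<Sum>t\<in>W ` space M. fibre_measure M W t * ln (fibre_measure M V (\<pi> t))) =
    - simple_entropy M V"
  using sum_fibre_measure_comp[where V = V and \<pi> = \<pi> and h = "\<lambda>u. ln (fibre_measure M V u)", OF W V]
  by (simp add: simple_entropy_def eta_eq sum_negf)

lemma fibre_measure_le_comp:
  assumes W: "simple_function M W" and V: "\<And>x. x \<in> space M \<Longrightarrow> V x = \<pi> (W x)"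
  shows "fibre_measure M W t \<le> fibre_measure M V (\<pi> t)"
  unfolding fibre_measure_def
proof (rule finite_measure_mono)
  show "W -` {t} \<inter> space M \<subseteq> V -` {\<pi> t} \<inter> space M" using V by auto
  have "simple_function M (\<pi> \<circ> W)" using W by (rule simple_function_compose)
  moreover have "simple_function M V = simple_function M (\<pi> \<circ> W)"
    by (rule simple_function_cong) (simp add: V)
  ultimately have "simple_function M V" by simp
  then show "V -` {\<pi> t} \<inter> space M \<in> events" by (rule simple_functionD(2))
qed

lemma mult_ln_fibre_measure_div:
  assumes T: "simple_function M T" and A: "\<And>x. x \<in> space M \<Longrightarrow> A x = a (T x)"
    and B: "\<And>x. x \<in> space M \<Longrightarrow> B x = b (T x)"
    and C: "\<And>x. x \<in> space M \<Longrightarrow> C x = c (T x)"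
  shows "fibre_measure M T t * ln (fibre_measure M T t /
      (fibre_measure M A (a t) * (fibre_measure M B (b t) / fibre_measure M C (c t)))) =
    fibre_measure M T t * ln (fibre_measure M T t)
    - fibre_measure M T t * ln (fibre_measure M A (a t))
    - fibre_measure M T t * ln (fibre_measure M B (b t))
    + fibre_measure M T t * ln (fibre_measure M C (c t))"
  by (intro mult_ln_div_mult_div)
    (use fibre_measure_le_comp[where V = A and \<pi> = a, OF T A]
      fibre_measure_le_comp[where V = B and \<pi> = b, OF T B]
      fibre_measure_le_comp[where V = C and \<pi> = c, OF T C] in \<open>auto simp: fibre_measure_def\<close>)

lemma conditional_mutual_information_simple_entropy:
  assumes X: "simple_function M X" and Y: "simple_function M Y" and Z: "simple_function M Z"
  shows "conditional_mutual_information (exp 1) (count_space (X ` space M))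
      (count_space (Y ` space M)) (count_space (Z ` space M)) X Y Z =
    simple_entropy M (\<lambda>x. (X x, Z x)) + simple_entropy M (\<lambda>x. (Y x, Z x))
    - simple_entropy M (\<lambda>x. (X x, Y x, Z x)) - simple_entropy M Z"
proof -
  interpret information_space M "exp 1" by standard simp
  define T where "T x = (X x, Y x, Z x)" for x
  define XZ where "XZ x = (X x, Z x)" for x
  define YZ where "YZ x = (Y x, Z x)" for x
  define pxz where "pxz = (\<lambda>(x::'b, y::'c, z::'d). (x, z))"
  define pyz where "pyz = (\<lambda>(x::'b, y::'c, z::'d). (y, z))"
  define pz where "pz = (\<lambda>(x::'b, y::'c, z::'d). z)"
  let ?f = "fibre_measure M"
  have T: "simple_function M T" unfolding T_def using X Y Z by (intro simple_function_Pair)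
  have XZ: "\<And>x. x \<in> space M \<Longrightarrow> XZ x = pxz (T x)"
    and YZ: "\<And>x. x \<in> space M \<Longrightarrow> YZ x = pyz (T x)"
    and Z': "\<And>x. x \<in> space M \<Longrightarrow> Z x = pz (T x)"
    by (simp_all add: XZ_def YZ_def T_def pxz_def pyz_def pz_def)
  have "conditional_mutual_information (exp 1) (count_space (X ` space M))
      (count_space (Y ` space M)) (count_space (Z ` space M)) X Y Z =
    (\<Sum>(x, y, z)\<in>T ` space M. ?f T (x, y, z) *
      log (exp 1) (?f T (x, y, z) / (?f XZ (x, z) * (?f YZ (y, z) / ?f Z z))))"
    using conditional_mutual_information_eq[OF simple_distributed_fibre_measure[OF Z]
        simple_distributed_fibre_measure[OF simple_function_Pair[OF Y Z]]
        simple_distributed_fibre_measure[OF simple_function_Pair[OF X Z]]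
        simple_distributed_fibre_measure[OF simple_function_Pair[OF X
          simple_function_Pair[OF Y Z]]]]
    unfolding T_def XZ_def YZ_def .
  also have "\<dots> = (\<Sum>t\<in>T ` space M. ?f T t * ln (?f T t) - ?f T t * ln (?f XZ (pxz t))
      - ?f T t * ln (?f YZ (pyz t)) + ?f T t * ln (?f Z (pz t)))"
  proof (intro sum.cong refl)
    fix t
    show "(case t of (x, y, z) \<Rightarrow> ?f T (x, y, z) *
        log (exp 1) (?f T (x, y, z) / (?f XZ (x, z) * (?f YZ (y, z) / ?f Z z)))) =
      ?f T t * ln (?f T t) - ?f T t * ln (?f XZ (pxz t)) - ?f T t * ln (?f YZ (pyz t))
        + ?f T t * ln (?f Z (pz t))"
      using mult_ln_fibre_measure_div
        [where A = XZ and a = pxz and B = YZ and b = pyz and C = Z and c = pz, OF T XZ YZ Z']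
      by (auto simp: log_def pxz_def pyz_def pz_def split: prod.splits)
  qed
  also have "\<dots> =
      - simple_entropy M T + simple_entropy M XZ + simple_entropy M YZ - simple_entropy M Z"
    using sum_fibre_measure_ln_comp[where V = T and \<pi> = "\<lambda>t. t", OF T refl]
      sum_fibre_measure_ln_comp[where V = XZ and \<pi> = pxz, OF T XZ]
      sum_fibre_measure_ln_comp[where V = YZ and \<pi> = pyz, OF T YZ]
      sum_fibre_measure_ln_comp[where V = Z and \<pi> = pz, OF T Z']
    by (simp add: sum.distrib sum_subtractf)
  finally show ?thesis unfolding T_def XZ_def YZ_def by simp
qed

lemma simple_entropy_submodular:
  assumes X: "simple_function M X" and Y: "simple_function M Y" and Z: "simple_function M Z"
  shows "simple_entropy M (\<lambda>x. (X x, Y x, Z x)) + simple_entropy M Z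
    \<le> simple_entropy M (\<lambda>x. (X x, Z x)) + simple_entropy M (\<lambda>x. (Y x, Z x))"
proof -
  interpret information_space M "exp 1" by standard simp
  show ?thesis
    using conditional_mutual_information_nonneg[OF X Y Z]
      conditional_mutual_information_simple_entropy[OF X Y Z] by simp
qed

end

lemma part_join_assoc_image:
  "part_join (part_join P Q) R = (\<lambda>(A, B, C). A \<inter> B \<inter> C) ` (P \<times> Q \<times> R)"
  unfolding part_join_def by auto

context prob_space
begin

lemma part_entropy_eq_simple_entropy:
  assumes V: "finite V" "W ` space M \<subseteq> V"
    and fibre: "\<And>v. v \<in> V \<Longrightarrow> W -` {v} \<inter> space M = h v"
  shows "part_entropy M (h ` V) = simple_entropy M W"
proof -
  have "part_entropy M (h ` V) = (\<Sum>v\<in>V. eta (measure M (h v)))"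
  proof (rule part_entropy_image[OF V(1)])
    fix v w assume "v \<in> V" "w \<in> V" "v \<noteq> w"
    then show "h v \<inter> h w = {}" using fibre[of v] fibre[of w] by auto
  qed
  also have "\<dots> = (\<Sum>v\<in>V. eta (fibre_measure M W v))"
    using fibre by (simp add: fibre_measure_def)
  also have "\<dots> = (\<Sum>v\<in>W ` space M. eta (fibre_measure M W v))"
  proof (rule sum.mono_neutral_right[OF V, rule_format])
    fix v assume "v \<in> V - W ` space M"
    then have "W -` {v} \<inter> space M = {}" by auto
    then show "eta (fibre_measure M W v) = 0" by (simp add: fibre_measure_def eta_def)
  qed
  finally show ?thesis unfolding simple_entropy_def .
qed

lemma simple_function_atom_of:
  assumes "measurable_partition M P"
  shows "simple_function M (atom_of P)"
  unfolding simple_function_def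
  using measurable_partitionD(1,2)[OF assms] atom_of_image_subset[OF assms] atom_of_vimage[OF assms]
  by (metis finite_subset in_mono)

lemma part_entropy_eq_simple_entropy_atom_of:
  assumes "measurable_partition M P"
  shows "part_entropy M P = simple_entropy M (atom_of P)"
  using part_entropy_eq_simple_entropy[of P "atom_of P" id] measurable_partitionD(1)[OF assms]
    atom_of_image_subset[OF assms] atom_of_vimage[OF assms] by simp

lemma part_entropy_part_join_eq_simple_entropy:
  assumes P: "measurable_partition M P" and R: "measurable_partition M R"
  shows "part_entropy M (part_join P R) = simple_entropy M (\<lambda>x. (atom_of P x, atom_of R x))"
  unfolding part_join_image
proof (rule part_entropy_eq_simple_entropy)
  show "finite (P \<times> R)" using measurable_partitionD(1)[OF P] measurable_partitionD(1)[OF R] by simp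
  show "(\<lambda>x. (atom_of P x, atom_of R x)) ` space M \<subseteq> P \<times> R"
    using atom_of_image_subset[OF P] atom_of_image_subset[OF R] by auto
  fix v assume "v \<in> P \<times> R"
  then obtain A C where "v = (A, C)" "A \<in> P" "C \<in> R" by auto
  then show "(\<lambda>x. (atom_of P x, atom_of R x)) -` {v} \<inter> space M = (case v of (A, B) \<Rightarrow> A \<inter> B)"
    using atom_of_vimage[OF P \<open>A \<in> P\<close>] atom_of_vimage[OF R \<open>C \<in> R\<close>] by auto
qed

lemma part_entropy_part_join3_eq_simple_entropy:
  assumes P: "measurable_partition M P" and Q: "measurable_partition M Q"
    and R: "measurable_partition M R"
  shows "part_entropy M (part_join (part_join P Q) R) =
    simple_entropy M (\<lambda>x. (atom_of P x, atom_of Q x, atom_of R x))"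
  unfolding part_join_assoc_image
proof (rule part_entropy_eq_simple_entropy)
  show "finite (P \<times> Q \<times> R)"
    using measurable_partitionD(1)[OF P] measurable_partitionD(1)[OF Q]
      measurable_partitionD(1)[OF R] by simp
  show "(\<lambda>x. (atom_of P x, atom_of Q x, atom_of R x)) ` space M \<subseteq> P \<times> Q \<times> R"
    using atom_of_image_subset[OF P] atom_of_image_subset[OF Q] atom_of_image_subset[OF R] by auto
  fix v assume "v \<in> P \<times> Q \<times> R"
  then obtain A B C where "v = (A, B, C)" "A \<in> P" "B \<in> Q" "C \<in> R" by auto
  then show "(\<lambda>x. (atom_of P x, atom_of Q x, atom_of R x)) -` {v} \<inter> space M =
      (case v of (A, B, C) \<Rightarrow> A \<inter> B \<inter> C)"
    using atom_of_vimage[OF P \<open>A \<in> P\<close>] atom_of_vimage[OF Q \<open>B \<in> Q\<close>]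
      atom_of_vimage[OF R \<open>C \<in> R\<close>] by auto
qed

lemma part_entropy_submodular:
  assumes P: "measurable_partition M P" and Q: "measurable_partition M Q"
    and R: "measurable_partition M R"
  shows "part_entropy M (part_join (part_join P Q) R) + part_entropy M R
    \<le> part_entropy M (part_join P R) + part_entropy M (part_join Q R)"
  unfolding part_entropy_part_join3_eq_simple_entropy[OF P Q R]
    part_entropy_part_join_eq_simple_entropy[OF P R]
    part_entropy_part_join_eq_simple_entropy[OF Q R] part_entropy_eq_simple_entropy_atom_of[OF R]
  using simple_entropy_submodular[OF simple_function_atom_of[OF P] simple_function_atom_of[OF Q]
      simple_function_atom_of[OF R]] .

lemma part_entropy_part_join_le_if_refines:
  assumes A: "measurable_partition M A" and B: "measurable_partition M B"
    and Z: "measurable_partition M Z" and "refines Z B"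
  shows "part_entropy M (part_join A Z) \<le> part_entropy M Z + cond_entropy M A B"
proof -
  have "part_entropy M (part_join (part_join A Z) B) + part_entropy M B
      \<le> part_entropy M (part_join A B) + part_entropy M (part_join Z B)"
    by (rule part_entropy_submodular[OF A Z B])
  moreover have "part_entropy M (part_join (part_join A Z) B) = part_entropy M (part_join A Z)"
    using measurable_partition_part_join[OF A Z] refines_part_join[OF \<open>refines Z B\<close>]
    by (intro part_entropy_part_join_if_refines[OF B]) (auto dest: measurable_partitionD(1))
  moreover have "part_entropy M (part_join Z B) = part_entropy M Z"
    using measurable_partitionD(1)[OF Z] \<open>refines Z B\<close>
    by (rule part_entropy_part_join_if_refines[OF B])
  ultimately show ?thesis using part_entropy_part_join[OF A B] by linarith
qed

end

section \<open>Joins of finite sequences of partitions\<close>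

lemma join_n_0: "join_n M as 0 = {space M}"
  unfolding join_n_def by simp

lemma join_n_Suc: "join_n M as (Suc n) = part_join (join_n M as n) (as n)"
proof
  show "join_n M as (Suc n) \<subseteq> part_join (join_n M as n) (as n)"
  proof
    fix S assume "S \<in> join_n M as (Suc n)"
    then obtain f where f: "S = space M \<inter> (\<Inter>i<Suc n. f i)" "\<forall>i<Suc n. f i \<in> as i"
      unfolding join_n_def by blast
    have "S = (space M \<inter> (\<Inter>i<n. f i)) \<inter> f n" using f(1) by (auto simp: lessThan_Suc)
    moreover have "space M \<inter> (\<Inter>i<n. f i) \<in> join_n M as n"
      using f(2) unfolding join_n_def by (intro CollectI exI[of _ f]) auto
    ultimately show "S \<in> part_join (join_n M as n) (as n)"
      using f(2) unfolding part_join_def by blast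
  qed
  show "part_join (join_n M as n) (as n) \<subseteq> join_n M as (Suc n)"
  proof
    fix S assume "S \<in> part_join (join_n M as n) (as n)"
    then obtain f A where f: "S = (space M \<inter> (\<Inter>i<n. f i)) \<inter> A" "\<forall>i<n. f i \<in> as i" "A \<in> as n"
      unfolding part_join_def join_n_def by blast
    define g where "g = f(n := A)"
    have "S = space M \<inter> (\<Inter>i<Suc n. g i)" using f(1) by (auto simp: lessThan_Suc g_def)
    moreover have "\<forall>i<Suc n. g i \<in> as i" using f(2,3) by (auto simp: g_def less_Suc_eq)
    ultimately show "S \<in> join_n M as (Suc n)" unfolding join_n_def by blast
  qed
qed

lemma join_n_cong: "(\<And>i. i < n \<Longrightarrow> as i = bs i) \<Longrightarrow> join_n M as n = join_n M bs n"
  unfolding join_n_def by (intro Collect_cong) metis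

lemma measurable_partition_join_n:
  "(\<And>i. i < n \<Longrightarrow> measurable_partition M (as i)) \<Longrightarrow> measurable_partition M (join_n M as n)"
  by (induction n)
    (simp_all add: join_n_0 join_n_Suc measurable_partition_space measurable_partition_part_join)

lemma join_n_refines: "i < n \<Longrightarrow> refines (join_n M as n) (as i)"
  unfolding refines_def join_n_def by blast

context prob_space
begin

lemma part_entropy_join_n_le:
  assumes Z: "measurable_partition M Z"
    and ab: "\<And>i. i < n \<Longrightarrow>
      measurable_partition M (as i) \<and> measurable_partition M (bs i) \<and> refines Z (bs i)"
  shows "part_entropy M (join_n M as n) \<le> part_entropy M Z + (\<Sum>i<n. cond_entropy M (as i) (bs i))"
proof -
  have claim: "part_entropy M (part_join (join_n M as m) Z)
      \<le> part_entropy M Z + (\<Sum>i<m. cond_entropy M (as i) (bs i))" if "m \<le> n" for m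
    using that
  proof (induction m)
    case 0
    have "part_entropy M (part_join Z {space M}) = part_entropy M Z"
      using measurable_partitionD(1)[OF Z] refines_space[OF Z]
      by (rule part_entropy_part_join_if_refines[OF measurable_partition_space])
    then show ?case by (simp add: join_n_0 part_join_commute)
  next
    case (Suc m)
    have J: "measurable_partition M (join_n M as m)"
      using ab Suc.prems by (intro measurable_partition_join_n) auto
    have a: "measurable_partition M (as m)" "measurable_partition M (bs m)" "refines Z (bs m)"
      using ab Suc.prems by auto
    have "part_entropy M (part_join (join_n M as (Suc m)) Z) + part_entropy M Z
        \<le> part_entropy M (part_join (join_n M as m) Z) + part_entropy M (part_join (as m) Z)"
      unfolding join_n_Suc by (rule part_entropy_submodular[OF J a(1) Z])
    moreover have
      "part_entropy M (part_join (as m) Z) \<le> part_entropy M Z + cond_entropy M (as m) (bs m)"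
      by (rule part_entropy_part_join_le_if_refines[OF a(1,2) Z a(3)])
    ultimately show ?case using Suc by simp
  qed
  have "part_entropy M (join_n M as n) \<le> part_entropy M (part_join (join_n M as n) Z)"
    using part_entropy_le_part_join[OF Z measurable_partition_join_n] ab
    by (simp add: part_join_commute)
  then show ?thesis using claim[OF order_refl] by linarith
qed

lemma part_entropy_join_n_le_if_net:
  assumes K: "\<And>\<alpha>. \<alpha> \<in> K \<Longrightarrow> measurable_partition M \<alpha>" and Z: "measurable_partition M Z"
    and F: "F \<subseteq> K" "\<And>\<beta>. \<beta> \<in> F \<Longrightarrow> refines Z \<beta>"
    and net: "\<And>\<alpha>. \<alpha> \<in> K \<Longrightarrow> \<exists>\<beta>\<in>F. rokhlin_dist M \<alpha> \<beta> < e"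
    and as: "\<And>i. i < n \<Longrightarrow> as i \<in> K"
  shows "part_entropy M (join_n M as n) \<le> part_entropy M Z + real n * e"
proof -
  define bs where "bs i = (SOME \<beta>. \<beta> \<in> F \<and> rokhlin_dist M (as i) \<beta> < e)" for i
  have bs: "bs i \<in> F" "rokhlin_dist M (as i) (bs i) < e" if "i < n" for i
    using someI_ex[OF net[OF as[OF that], unfolded Bex_def]] unfolding bs_def by auto
  have "part_entropy M (join_n M as n) \<le> part_entropy M Z + (\<Sum>i<n. cond_entropy M (as i) (bs i))"
  proof (rule part_entropy_join_n_le[OF Z])
    fix i assume "i < n"
    then show "measurable_partition M (as i) \<and> measurable_partition M (bs i) \<and> refines Z (bs i)"
      using as bs(1) F K by blast
  qed
  also have "\<dots> \<le> part_entropy M Z + (\<Sum>i<n. e)"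
  proof (intro add_left_mono sum_mono)
    fix i assume "i \<in> {..<n}"
    then have "i < n" by simp
    then show "cond_entropy M (as i) (bs i) \<le> e"
      using cond_entropy_le_rokhlin_dist[OF K[OF as], of i "bs i"] bs(2) by fastforce
  qed
  finally show ?thesis by simp
qed

end

section \<open>Partitions with the same majority pattern are Rokhlin close\<close>

lemma one_minus_max_le_sum_eta:
  fixes p :: "'b \<Rightarrow> real"
  assumes p: "\<And>i. 0 \<le> p i" and sum: "(\<Sum>i\<in>I. p i) = 1"
    and g: "g \<in> I" "\<And>i. i \<in> I \<Longrightarrow> p i \<le> p g"
  shows "1 - p g \<le> (\<Sum>i\<in>I. eta (p i))"
proof -
  have pg: "0 < p g"
  proof (rule ccontr)
    assume "\<not> 0 < p g"
    then have "\<forall>i\<in>I. p i = 0" using g(2) p by (meson order.antisym not_less order.trans)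
    then show False using sum by simp
  qed
  have "(\<Sum>i\<in>I. p i * - ln (p g)) \<le> (\<Sum>i\<in>I. eta (p i))"
  proof (rule sum_mono)
    fix i assume "i \<in> I"
    show "p i * - ln (p g) \<le> eta (p i)"
    proof (cases "p i = 0")
      case False
      then have "0 < p i" using p[of i] by simp
      then have "ln (p i) \<le> ln (p g)" using g(2)[OF \<open>i \<in> I\<close>] pg by simp
      then show ?thesis using \<open>0 < p i\<close> by (simp add: eta_eq mult_left_mono)
    qed (simp add: eta_def)
  qed
  moreover have "(\<Sum>i\<in>I. p i * - ln (p g)) = (\<Sum>i\<in>I. p i) * - ln (p g)"
    by (simp only: sum_distrib_right)
  moreover have "(\<Sum>i\<in>I. p i) * - ln (p g) = - ln (p g)" using sum by simp
  moreover have "ln (p g) \<le> p g - 1" using pg by (rule ln_le_minus_one)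
  ultimately show ?thesis by linarith
qed

lemma sum_eta_le_linear_bound:
  fixes p :: "'b \<Rightarrow> real"
  assumes I: "finite I" and p: "\<And>i. 0 \<le> p i" and sum: "(\<Sum>i\<in>I. p i) = 1"
    and i0: "i0 \<in> I" and L: "0 \<le> L"
  shows "(\<Sum>i\<in>I. eta (p i)) \<le> (1 + L) * (1 - p i0) + card I * exp (- L - 1)"
proof -
  have rest: "(\<Sum>i\<in>I - {i0}. p i) = 1 - p i0" using sum sum.remove[OF I i0, of p] by simp
  have "(\<Sum>i\<in>I - {i0}. eta (p i)) \<le> (\<Sum>i\<in>I - {i0}. L * p i + exp (- L - 1))"
    using p by (intro sum_mono eta_le_linear)
  also have "\<dots> = L * (1 - p i0) + card (I - {i0}) * exp (- L - 1)"
    by (simp add: sum.distrib rest flip: sum_distrib_left)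
  also have "\<dots> \<le> L * (1 - p i0) + card I * exp (- L - 1)"
    by (intro add_left_mono mult_right_mono) (auto simp: card_Diff1_le)
  finally have "(\<Sum>i\<in>I - {i0}. eta (p i)) \<le> L * (1 - p i0) + card I * exp (- L - 1)" .
  moreover have "eta (p i0) \<le> 1 - p i0" using p by (rule eta_le_one_minus)
  moreover have "(\<Sum>i\<in>I. eta (p i)) = eta (p i0) + (\<Sum>i\<in>I - {i0}. eta (p i))"
    by (rule sum.remove[OF I i0])
  ultimately show ?thesis by (simp add: distrib_right)
qed

context prob_space
begin

lemma measure_Diff_majority_le:
  assumes P: "measurable_partition M P" and B: "B \<in> sets M" and g: "g \<in> P"
    and g_max: "\<And>A. A \<in> P \<Longrightarrow> measure M (A \<inter> B) \<le> measure M (g \<inter> B)"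
  shows "measure M (B - g) \<le> measure M B * (\<Sum>A\<in>P. eta (measure M (A \<inter> B) / measure M B))"
proof (cases "measure M B = 0")
  case True
  have "measure M (B - g) \<le> measure M B" using B by (intro finite_measure_mono) auto
  then show ?thesis using True by simp
next
  case False
  then have m: "0 < measure M B" using measure_nonneg[of M B] by linarith
  define p where "p A = measure M (A \<inter> B) / measure M B" for A
  have "(\<Sum>A\<in>P. p A) = 1"
    using sum_measure_Int_partition[OF P B] m by (simp add: p_def flip: sum_divide_distrib)
  then have "1 - p g \<le> (\<Sum>A\<in>P. eta (p A))"
    using g g_max m by (intro one_minus_max_le_sum_eta) (auto simp: p_def divide_right_mono)
  moreover have "measure M (B - g) = measure M B * (1 - p g)"
  proof -
    have "g \<in> sets M" using g measurable_partitionD(2)[OF P] by blast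
    then have "measure M (B - g) = measure M B - measure M (g \<inter> B)"
      using finite_measure_Diff'[OF B] by (simp add: Int_commute)
    then show ?thesis using m by (simp add: p_def right_diff_distrib)
  qed
  ultimately show ?thesis using m by (simp add: p_def)
qed

lemma measure_mult_sum_eta_le_if_almost_contained:
  assumes P: "measurable_partition M P" and G: "G \<in> sets M" and E: "E \<in> sets M"
    and A0: "A0 \<in> P" "G - A0 \<subseteq> E" and L: "0 \<le> L"
  shows "measure M G * (\<Sum>A\<in>P. eta (measure M (A \<inter> G) / measure M G))
    \<le> (1 + L) * measure M (G \<inter> E) + card P * exp (- L - 1) * measure M G"
proof (cases "measure M G = 0")
  case False
  then have m: "0 < measure M G" using measure_nonneg[of M G] by linarith
  define x where "x = measure M (A0 \<inter> G) / measure M G"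
  have "(\<Sum>A\<in>P. measure M (A \<inter> G) / measure M G) = 1"
    using sum_measure_Int_partition[OF P G] m by (simp flip: sum_divide_distrib)
  then have "(\<Sum>A\<in>P. eta (measure M (A \<inter> G) / measure M G))
      \<le> (1 + L) * (1 - x) + card P * exp (- L - 1)"
    unfolding x_def using measurable_partitionD(1)[OF P] A0(1) L
    by (intro sum_eta_le_linear_bound) auto
  then have "measure M G * (\<Sum>A\<in>P. eta (measure M (A \<inter> G) / measure M G))
      \<le> measure M G * ((1 + L) * (1 - x) + card P * exp (- L - 1))"
    using m by (intro mult_left_mono) auto
  also have "\<dots> = (1 + L) * (measure M G * (1 - x)) + card P * exp (- L - 1) * measure M G"
    by (simp add: algebra_simps)
  also have "measure M G * (1 - x) = measure M (G - A0)"
  proof -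
    have "A0 \<in> sets M" using A0(1) measurable_partitionD(2)[OF P] by blast
    then have "measure M (G - A0) = measure M G - measure M (A0 \<inter> G)"
      using finite_measure_Diff'[OF G] by (simp add: Int_commute)
    then show ?thesis using m by (simp add: x_def right_diff_distrib)
  qed
  also have "measure M (G - A0) \<le> measure M (G \<inter> E)"
    using A0(2) G E by (intro finite_measure_mono) auto
  finally show ?thesis using L by simp
qed (simp add: L)

lemma cond_entropy_le_if_almost_refines:
  assumes P: "measurable_partition M P" and Q: "measurable_partition M Q" and E: "E \<in> sets M"
    and almost: "\<And>G. G \<in> Q \<Longrightarrow> \<exists>A\<in>P. G - A \<subseteq> E" and L: "0 \<le> L"
  shows "cond_entropy M P Q \<le> (1 + L) * measure M E + card P * exp (- L - 1)"
proof -
  have "cond_entropy M P Q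
      \<le> (\<Sum>G\<in>Q. (1 + L) * measure M (G \<inter> E) + card P * exp (- L - 1) * measure M G)"
    unfolding cond_entropy_def
  proof (rule sum_mono)
    fix G assume "G \<in> Q"
    then obtain A0 where "A0 \<in> P" "G - A0 \<subseteq> E" using almost by blast
    moreover have "G \<in> sets M" using \<open>G \<in> Q\<close> measurable_partitionD(2)[OF Q] by blast
    ultimately show "measure M G * (\<Sum>A\<in>P. eta (measure M (A \<inter> G) / measure M G))
        \<le> (1 + L) * measure M (G \<inter> E) + card P * exp (- L - 1) * measure M G"
      using measure_mult_sum_eta_le_if_almost_contained[OF P _ E _ _ L] by blast
  qed
  also have "\<dots> = (1 + L) * (\<Sum>G\<in>Q. measure M (G \<inter> E)) + card P * exp (- L - 1) * (\<Sum>G\<in>Q. measure M G)"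
    by (simp add: sum.distrib sum_distrib_left)
  also have "\<dots> = (1 + L) * measure M E + card P * exp (- L - 1)"
    using sum_measure_Int_partition[OF Q E] sum_measure_partition[OF Q] by (simp add: Int_commute)
  finally show ?thesis .
qed

end

definition majority_atom :: "'a measure \<Rightarrow> 'a set set \<Rightarrow> 'a set \<Rightarrow> 'a set" where
  "majority_atom M P B = (SOME A. A \<in> P \<and> (\<forall>A'\<in>P. measure M (A' \<inter> B) \<le> measure M (A \<inter> B)))"

definition majority_error :: "'a measure \<Rightarrow> 'a set set \<Rightarrow> 'a set set \<Rightarrow> 'a set" where
  "majority_error M P Q = (\<Union>B\<in>Q. B - majority_atom M P B)"

context prob_space
begin

lemma
  assumes "measurable_partition M P"
  shows majority_atom_mem: "majority_atom M P B \<in> P"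
    and majority_atom_max: "A \<in> P \<Longrightarrow> measure M (A \<inter> B) \<le> measure M (majority_atom M P B \<inter> B)"
proof -
  note p = measurable_partitionD[OF assms]
  have "P \<noteq> {}" using assms by (rule measurable_partition_nonempty)
  then obtain A0 where "A0 \<in> P" "Max ((\<lambda>A. measure M (A \<inter> B)) ` P) = measure M (A0 \<inter> B)"
    using obtains_MAX[OF p(1)] by metis
  then have "\<exists>A. A \<in> P \<and> (\<forall>A'\<in>P. measure M (A' \<inter> B) \<le> measure M (A \<inter> B))"
    using p(1) by (metis Max_ge finite_imageI imageI)
  then have "majority_atom M P B \<in> P \<and>
      (\<forall>A'\<in>P. measure M (A' \<inter> B) \<le> measure M (majority_atom M P B \<inter> B))"
    unfolding majority_atom_def by (rule someI_ex)
  then show "majority_atom M P B \<in> P"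
    and "A \<in> P \<Longrightarrow> measure M (A \<inter> B) \<le> measure M (majority_atom M P B \<inter> B)" by auto
qed

lemma majority_error_sets:
  assumes "measurable_partition M P" "measurable_partition M Q"
  shows "majority_error M P Q \<in> sets M"
  unfolding majority_error_def
  using measurable_partitionD(1,2)[OF assms(2)] measurable_partitionD(2)[OF assms(1)]
    majority_atom_mem[OF assms(1)] by blast

lemma measure_majority_error_le:
  assumes P: "measurable_partition M P" and Q: "measurable_partition M Q"
  shows "measure M (majority_error M P Q) \<le> cond_entropy M P Q"
proof -
  note q = measurable_partitionD[OF Q]
  have sets: "B - majority_atom M P B \<in> sets M" if "B \<in> Q" for B
    using that majority_atom_mem[OF P] measurable_partitionD(2)[OF P] q(2) by blast
  have "measure M (majority_error M P Q) \<le> (\<Sum>B\<in>Q. measure M (B - majority_atom M P B))"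
    unfolding majority_error_def using sets q(1) by (intro finite_measure_subadditive_finite) auto
  also have "\<dots> \<le> cond_entropy M P Q"
    unfolding cond_entropy_def using q(2)
    by (intro sum_mono measure_Diff_majority_le[OF P] majority_atom_mem[OF P]
        majority_atom_max[OF P]) auto
  finally show ?thesis .
qed

end

(*
  If A' = g' B0, a point of A' outside both error sets lies in an atom B of Q with
  g' B = A' = g' B0, hence in g B = g B0.  If A' is not of the form g' B, the error set of g'
  contains all of A'.
*)
lemma atom_almost_covered_if_same_pattern:
  assumes Q: "measurable_partition M Q" and \<beta>: "measurable_partition M \<beta>" and "\<alpha> \<noteq> {}"
    and g: "\<And>B. B \<in> Q \<Longrightarrow> g B \<in> \<alpha>" and g': "\<And>B. B \<in> Q \<Longrightarrow> g' B \<in> \<beta>"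
    and pattern: "\<And>B B'. B \<in> Q \<Longrightarrow> B' \<in> Q \<Longrightarrow> g B = g B' \<longleftrightarrow> g' B = g' B'"
    and A': "A' \<in> \<beta>"
  shows "\<exists>A\<in>\<alpha>. A' - A \<subseteq> (\<Union>B\<in>Q. B - g B) \<union> (\<Union>B\<in>Q. B - g' B)"
proof -
  let ?E = "(\<Union>B\<in>Q. B - g B) \<union> (\<Union>B\<in>Q. B - g' B)"
  have good: "\<exists>B\<in>Q. x \<in> g B \<and> g' B = A'" if x: "x \<in> A'" "x \<notin> ?E" for x
  proof -
    obtain B where B: "B \<in> Q" "x \<in> B"
      using x(1) A' measurable_partition_subset_space[OF \<beta>] measurable_partitionD(3)[OF Q] by blast
    then have "x \<in> g B" "x \<in> g' B" using x(2) by auto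
    moreover have "g' B = A'"
      using measurable_partitionD(4)[OF \<beta> g'[OF B(1)] A'] \<open>x \<in> g' B\<close> x(1) by blast
    ultimately show ?thesis using B(1) by blast
  qed
  show ?thesis
  proof (cases "\<exists>B0\<in>Q. g' B0 = A'")
    case True
    then obtain B0 where B0: "B0 \<in> Q" "g' B0 = A'" by blast
    have "A' - g B0 \<subseteq> ?E"
    proof
      fix x assume x: "x \<in> A' - g B0"
      show "x \<in> ?E"
      proof (rule ccontr)
        assume "x \<notin> ?E"
        then obtain B where B: "B \<in> Q" "x \<in> g B" "g' B = A'" using good x by blast
        then have "g B = g B0" using pattern[OF B(1) B0(1)] B0(2) by simp
        then show False using B(2) x by simp
      qed
    qed
    then show ?thesis using g[OF B0(1)] by blast
  next
    case False
    then have "A' \<subseteq> ?E" using good by blast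
    then show ?thesis using \<open>\<alpha> \<noteq> {}\<close> by blast
  qed
qed

context prob_space
begin

lemma cond_entropy_le_if_same_majority_pattern:
  assumes \<alpha>: "measurable_partition M \<alpha>" and \<beta>: "measurable_partition M \<beta>"
    and Q: "measurable_partition M Q"
    and pattern: "\<And>B B'. B \<in> Q \<Longrightarrow> B' \<in> Q \<Longrightarrow>
      majority_atom M \<alpha> B = majority_atom M \<alpha> B' \<longleftrightarrow> majority_atom M \<beta> B = majority_atom M \<beta> B'"
    and L: "0 \<le> L"
  shows "cond_entropy M \<alpha> \<beta>
    \<le> (1 + L) * (cond_entropy M \<alpha> Q + cond_entropy M \<beta> Q) + card \<alpha> * exp (- L - 1)"
proof -
  let ?E = "majority_error M \<alpha> Q \<union> majority_error M \<beta> Q"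
  have E: "?E \<in> sets M" using majority_error_sets[OF \<alpha> Q] majority_error_sets[OF \<beta> Q] by blast
  have "cond_entropy M \<alpha> \<beta> \<le> (1 + L) * measure M ?E + card \<alpha> * exp (- L - 1)"
  proof (rule cond_entropy_le_if_almost_refines[OF \<alpha> \<beta> E _ L])
    fix A' assume "A' \<in> \<beta>"
    then show "\<exists>A\<in>\<alpha>. A' - A \<subseteq> ?E"
      using atom_almost_covered_if_same_pattern
          [where g = "majority_atom M \<alpha>" and g' = "majority_atom M \<beta>",
           OF Q \<beta> measurable_partition_nonempty[OF \<alpha>] majority_atom_mem[OF \<alpha>]
           majority_atom_mem[OF \<beta>] pattern]
      unfolding majority_error_def by blast
  qed
  also have "\<dots> \<le> (1 + L) * (cond_entropy M \<alpha> Q + cond_entropy M \<beta> Q) + card \<alpha> * exp (- L - 1)"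
  proof -
    have "measure M ?E \<le> measure M (majority_error M \<alpha> Q) + measure M (majority_error M \<beta> Q)"
      using majority_error_sets[OF \<alpha> Q] majority_error_sets[OF \<beta> Q] by (rule measure_Un_le)
    then show ?thesis
      using measure_majority_error_le[OF \<alpha> Q] measure_majority_error_le[OF \<beta> Q] L
      by (intro add_right_mono mult_left_mono) auto
  qed
  finally show ?thesis .
qed

lemma rokhlin_dist_le_if_same_majority_pattern:
  assumes \<alpha>: "measurable_partition M \<alpha>" and \<beta>: "measurable_partition M \<beta>"
    and Q: "measurable_partition M Q"
    and pattern: "\<And>B B'. B \<in> Q \<Longrightarrow> B' \<in> Q \<Longrightarrow>
      majority_atom M \<alpha> B = majority_atom M \<alpha> B' \<longleftrightarrow> majority_atom M \<beta> B = majority_atom M \<beta> B'"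
    and L: "0 \<le> L"
  shows "rokhlin_dist M \<alpha> \<beta> \<le> 2 * (1 + L) * (cond_entropy M \<alpha> Q + cond_entropy M \<beta> Q)
    + (card \<alpha> + card \<beta>) * exp (- L - 1)"
  using cond_entropy_le_if_same_majority_pattern[OF \<alpha> \<beta> Q pattern L]
    cond_entropy_le_if_same_majority_pattern[OF \<beta> \<alpha> Q pattern[symmetric] L]
  unfolding rokhlin_dist_def ring_distribs of_nat_add by linarith

end

lemma exists_exp_tail_le:
  fixes \<delta> :: real
  assumes "0 < \<delta>"
  obtains L where "0 \<le> L" "real r * exp (- L - 1) \<le> \<delta>"
proof -
  define L where "L = ln (real r / \<delta> + 1)"
  have pos: "0 < real r / \<delta> + 1" using assms by (intro add_nonneg_pos) auto
  have L: "0 \<le> L" using assms by (simp add: L_def)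
  have "real r * exp (- L - 1) \<le> real r * exp (- L)" by (intro mult_left_mono) auto
  also have "\<dots> = real r / (real r / \<delta> + 1)"
    using pos by (simp add: L_def exp_minus divide_inverse)
  also have "\<dots> \<le> \<delta>" using assms pos by (simp add: divide_le_eq field_simps)
  finally show ?thesis by (rule that[OF L])
qed

lemma finite_net_if_finitely_many_classes:
  assumes "finite (p ` K)" and close: "\<And>\<alpha> \<beta>. \<alpha> \<in> K \<Longrightarrow> \<beta> \<in> K \<Longrightarrow> p \<alpha> = p \<beta> \<Longrightarrow> d \<alpha> \<beta> < \<epsilon>"
  shows "\<exists>F. finite F \<and> F \<subseteq> K \<and> (\<forall>\<alpha>\<in>K. \<exists>\<beta>\<in>F. d \<alpha> \<beta> < \<epsilon>)"
proof -
  define rep where "rep q = (SOME \<beta>. \<beta> \<in> K \<and> p \<beta> = q)" for q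
  have rep: "rep (p \<alpha>) \<in> K \<and> p (rep (p \<alpha>)) = p \<alpha>" if "\<alpha> \<in> K" for \<alpha>
    unfolding rep_def by (rule someI[of _ \<alpha>]) (simp add: that)
  show ?thesis
  proof (intro exI conjI ballI)
    show "finite (rep ` p ` K)" using assms(1) by simp
    show "rep ` p ` K \<subseteq> K" using rep by auto
    fix \<alpha> assume "\<alpha> \<in> K"
    then show "\<exists>\<beta>\<in>rep ` p ` K. d \<alpha> \<beta> < \<epsilon>"
      using rep[OF \<open>\<alpha> \<in> K\<close>] close[OF \<open>\<alpha> \<in> K\<close>, of "rep (p \<alpha>)"] by auto
  qed
qed

context prob_space
begin

lemma rokhlin_net_if_cond_entropy_small:
  assumes K: "K \<subseteq> partitions_le M r" and \<epsilon>: "0 < \<epsilon>"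
  obtains c where "0 < c"
    and "\<And>Q. measurable_partition M Q \<Longrightarrow> (\<And>\<alpha>. \<alpha> \<in> K \<Longrightarrow> cond_entropy M \<alpha> Q < c) \<Longrightarrow>
      \<exists>F. finite F \<and> F \<subseteq> K \<and> (\<forall>\<alpha>\<in>K. \<exists>\<beta>\<in>F. rokhlin_dist M \<alpha> \<beta> < \<epsilon>)"
proof -
  have "0 < \<epsilon> / 8" using \<epsilon> by simp
  then obtain L where L: "0 \<le> L" and exp_L: "real r * exp (- L - 1) \<le> \<epsilon> / 8"
    by (rule exists_exp_tail_le) blast
  \<comment> \<open>Both terms of the bound for partitions in one class become at most \<open>\<epsilon> / 4\<close>.\<close>
  define c where "c = \<epsilon> / (16 * (1 + L))"
  have c: "2 * (1 + L) * (2 * c) = \<epsilon> / 4" using L by (simp add: c_def field_simps)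
  have "0 < c" using \<epsilon> L by (simp add: c_def)
  then show ?thesis
  proof (rule that)
    fix Q assume Q: "measurable_partition M Q" and small: "\<And>\<alpha>. \<alpha> \<in> K \<Longrightarrow> cond_entropy M \<alpha> Q < c"
    have part: "measurable_partition M \<alpha>" "card \<alpha> \<le> r" if "\<alpha> \<in> K" for \<alpha>
      using partitions_leD K that by blast+
    define pattern where "pattern \<alpha> = {(B, B') \<in> Q \<times> Q. majority_atom M \<alpha> B = majority_atom M \<alpha> B'}"
      for \<alpha>
    show "\<exists>F. finite F \<and> F \<subseteq> K \<and> (\<forall>\<alpha>\<in>K. \<exists>\<beta>\<in>F. rokhlin_dist M \<alpha> \<beta> < \<epsilon>)"
    proof (rule finite_net_if_finitely_many_classes[where p = pattern])
      have "pattern ` K \<subseteq> Pow (Q \<times> Q)" unfolding pattern_def by blast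
      then show "finite (pattern ` K)"
        using measurable_partitionD(1)[OF Q] by (meson finite_Pow_iff finite_SigmaI finite_subset)
      fix \<alpha> \<beta> assume \<alpha>: "\<alpha> \<in> K" and \<beta>: "\<beta> \<in> K" and "pattern \<alpha> = pattern \<beta>"
      then have same: "majority_atom M \<alpha> B = majority_atom M \<alpha> B' \<longleftrightarrow>
          majority_atom M \<beta> B = majority_atom M \<beta> B'" if "B \<in> Q" "B' \<in> Q" for B B'
        using that unfolding pattern_def by blast
      have "rokhlin_dist M \<alpha> \<beta> \<le> 2 * (1 + L) * (cond_entropy M \<alpha> Q + cond_entropy M \<beta> Q)
          + (card \<alpha> + card \<beta>) * exp (- L - 1)"
        by (rule rokhlin_dist_le_if_same_majority_pattern[OF part(1)[OF \<alpha>] part(1)[OF \<beta>] Q same L])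
      also have "\<dots> \<le> 2 * (1 + L) * (2 * c) + (real r + real r) * exp (- L - 1)"
        using small[OF \<alpha>] small[OF \<beta>] part(2)[OF \<alpha>] part(2)[OF \<beta>] L
        by (intro add_mono mult_left_mono mult_right_mono) auto
      also have "\<dots> < \<epsilon>" using c exp_L \<epsilon> by (simp add: ring_distribs)
      finally show "rokhlin_dist M \<alpha> \<beta> < \<epsilon>" .
    qed
  qed
qed

end

section \<open>Growth of pattern entropy\<close>

lemma limsup_div_eq_0_if_sublinear:
  fixes f :: "nat \<Rightarrow> ennreal"
  assumes sublinear: "\<And>e. 0 < e \<Longrightarrow> \<exists>C. \<forall>n. f n \<le> ennreal (C + real n * e)"
  shows "limsup (\<lambda>n. f n / of_nat n) = 0"
proof -
  have "limsup (\<lambda>n. f n / of_nat n) \<le> 0 + ennreal e" if e: "0 < e" for e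
  proof -
    obtain C0 where C0: "\<And>n. f n \<le> ennreal (C0 + real n * (e / 2))"
      using sublinear[of "e / 2"] e by auto
    define C where "C = max 0 C0"
    have C: "f n \<le> ennreal (C + real n * (e / 2))" for n
      using C0[of n] by (rule order.trans) (intro ennreal_leI, simp add: C_def)
    obtain N :: nat where N: "C / (e / 2) \<le> real N" using real_arch_simple by blast
    have "\<forall>\<^sub>F n in sequentially. f n / of_nat n \<le> ennreal e"
      using eventually_ge_at_top[of "Suc N"]
    proof eventually_elim
      case (elim n)
      then have n: "0 < real n" "real N \<le> real n" by simp_all
      have "C \<le> real N * (e / 2)" using N e by (simp add: pos_divide_le_eq)
      also have "\<dots> \<le> real n * (e / 2)" using n(2) e by (intro mult_right_mono) auto
      finally have bound: "(C + real n * (e / 2)) / real n \<le> e"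
        using n(1) by (simp add: field_simps)
      have "f n / of_nat n \<le> ennreal (C + real n * (e / 2)) / ennreal (real n)"
        unfolding ennreal_of_nat_eq_real_of_nat by (rule divide_right_mono_ennreal[OF C])
      also have "\<dots> = ennreal ((C + real n * (e / 2)) / real n)"
        using n(1) e by (intro divide_ennreal) (auto simp: C_def)
      also have "\<dots> \<le> ennreal e" using bound by (rule ennreal_leI)
      finally show ?case .
    qed
    then show ?thesis by (simp add: Limsup_bounded)
  qed
  then have "limsup (\<lambda>n. f n / of_nat n) \<le> 0" by (rule ennreal_le_epsilon)
  then show ?thesis by simp
qed

lemma limsup_div_ge_if_linear_lower_bound:
  fixes f :: "nat \<Rightarrow> ennreal"
  assumes c: "0 \<le> c" and linear: "\<And>n. ennreal (real n * c) \<le> f n"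
  shows "ennreal c \<le> limsup (\<lambda>n. f n / of_nat n)"
proof (rule le_Limsup[OF trivial_limit_sequentially])
  show "\<forall>\<^sub>F n in sequentially. ennreal c \<le> f n / of_nat n"
    using eventually_ge_at_top[of 1]
  proof eventually_elim
    case (elim n)
    have "ennreal c = ennreal (real n * c) / ennreal (real n)"
      using elim c by (simp add: divide_ennreal)
    also have "\<dots> \<le> f n / ennreal (real n)" by (rule divide_right_mono_ennreal[OF linear])
    finally show ?case by (simp add: ennreal_of_nat_eq_real_of_nat)
  qed
qed

context prob_space
begin

lemma pattern_sup_sublinear_if_net:
  assumes K: "\<And>\<alpha>. \<alpha> \<in> K \<Longrightarrow> measurable_partition M \<alpha>"
    and F: "finite F" "F \<subseteq> K" and net: "\<And>\<alpha>. \<alpha> \<in> K \<Longrightarrow> \<exists>\<beta>\<in>F. rokhlin_dist M \<alpha> \<beta> < e"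
  shows "\<exists>C. \<forall>n. pattern_sup M K n \<le> ennreal (C + real n * e)"
proof -
  obtain fs where fs: "set fs = F" using finite_list[OF F(1)] by blast
  define Z where "Z = join_n M (\<lambda>i. fs ! i) (length fs)"
  have Z: "measurable_partition M Z"
    unfolding Z_def by (intro measurable_partition_join_n K) (use fs F(2) nth_mem in blast)
  have Z_refines: "refines Z \<beta>" if "\<beta> \<in> F" for \<beta>
  proof -
    have "\<beta> \<in> set fs" using that fs by simp
    then obtain i where "i < length fs" "fs ! i = \<beta>" by (auto simp: in_set_conv_nth)
    then show ?thesis using join_n_refines[of i "length fs" M "\<lambda>i. fs ! i"] by (simp add: Z_def)
  qed
  have "pattern_sup M K n \<le> ennreal (part_entropy M Z + real n * e)" for n
    unfolding pattern_sup_def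
    by (intro SUP_least ennreal_leI part_entropy_join_n_le_if_net[OF K Z F(2) Z_refines net]) auto
  then show ?thesis by blast
qed

lemma max_pattern_entropy_eq_0_if_precompact:
  assumes K: "\<And>\<alpha>. \<alpha> \<in> K \<Longrightarrow> measurable_partition M \<alpha>" and "rokhlin_precompact M K"
  shows "max_pattern_entropy M K = 0"
  unfolding max_pattern_entropy_def
proof (rule limsup_div_eq_0_if_sublinear)
  fix e :: real assume "0 < e"
  then obtain F where F: "finite F" "F \<subseteq> K" and net: "\<forall>\<alpha>\<in>K. \<exists>\<beta>\<in>F. rokhlin_dist M \<alpha> \<beta> < e"
    using \<open>rokhlin_precompact M K\<close>[unfolded rokhlin_precompact_def, rule_format, OF \<open>0 < e\<close>] by auto
  show "\<exists>C. \<forall>n. pattern_sup M K n \<le> ennreal (C + real n * e)"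
    by (rule pattern_sup_sublinear_if_net[OF K F]) (use net in auto)
qed

lemma cond_entropy_bounded_below_if_not_precompact:
  assumes K: "K \<subseteq> partitions_le M r" and not_precompact: "\<not> rokhlin_precompact M K"
  obtains c where "0 < c" and "\<And>Q. measurable_partition M Q \<Longrightarrow> \<exists>\<alpha>\<in>K. c \<le> cond_entropy M \<alpha> Q"
proof -
  obtain \<epsilon> where \<epsilon>: "0 < \<epsilon>"
    and no_net: "\<And>F. finite F \<Longrightarrow> F \<subseteq> K \<Longrightarrow> \<exists>\<alpha>\<in>K. \<forall>\<beta>\<in>F. \<epsilon> \<le> rokhlin_dist M \<alpha> \<beta>"
  proof -
    have "\<exists>\<epsilon>>0. \<forall>F\<subseteq>K. finite F \<longrightarrow> (\<exists>\<alpha>\<in>K. \<forall>\<beta>\<in>F. \<epsilon> \<le> rokhlin_dist M \<alpha> \<beta>)"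
      using not_precompact unfolding rokhlin_precompact_def by (simp add: not_less)
    then show ?thesis using that by blast
  qed
  obtain c where "0 < c" and net: "\<And>Q. measurable_partition M Q \<Longrightarrow>
      (\<And>\<alpha>. \<alpha> \<in> K \<Longrightarrow> cond_entropy M \<alpha> Q < c) \<Longrightarrow>
      \<exists>F. finite F \<and> F \<subseteq> K \<and> (\<forall>\<alpha>\<in>K. \<exists>\<beta>\<in>F. rokhlin_dist M \<alpha> \<beta> < \<epsilon>)"
    by (rule rokhlin_net_if_cond_entropy_small[OF K \<epsilon>]) blast
  show ?thesis
  proof (rule that[OF \<open>0 < c\<close>])
    fix Q assume Q: "measurable_partition M Q"
    show "\<exists>\<alpha>\<in>K. c \<le> cond_entropy M \<alpha> Q"
    proof (rule ccontr)
      assume "\<not> (\<exists>\<alpha>\<in>K. c \<le> cond_entropy M \<alpha> Q)"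
      then obtain F where "finite F" "F \<subseteq> K" "\<forall>\<alpha>\<in>K. \<exists>\<beta>\<in>F. rokhlin_dist M \<alpha> \<beta> < \<epsilon>"
        using net[OF Q] by (auto simp: not_le)
      then obtain \<alpha> where "\<alpha> \<in> K" "\<forall>\<beta>\<in>F. \<epsilon> \<le> rokhlin_dist M \<alpha> \<beta>" using no_net by blast
      with \<open>\<forall>\<alpha>\<in>K. \<exists>\<beta>\<in>F. rokhlin_dist M \<alpha> \<beta> < \<epsilon>\<close> show False by fastforce
    qed
  qed
qed

lemma exists_join_n_entropy_ge:
  assumes K: "\<And>\<alpha>. \<alpha> \<in> K \<Longrightarrow> measurable_partition M \<alpha>"
    and big: "\<And>Q. measurable_partition M Q \<Longrightarrow> \<exists>\<alpha>\<in>K. c \<le> cond_entropy M \<alpha> Q"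
  shows "\<exists>as. (\<forall>i<n. as i \<in> K) \<and> real n * c \<le> part_entropy M (join_n M as n)"
proof (induction n)
  case 0
  show ?case by (simp add: join_n_0 part_entropy_def eta_def prob_space)
next
  case (Suc n)
  then obtain as where as: "\<forall>i<n. as i \<in> K" "real n * c \<le> part_entropy M (join_n M as n)" by blast
  have J: "measurable_partition M (join_n M as n)"
    using as(1) K by (intro measurable_partition_join_n) auto
  obtain \<alpha> where \<alpha>: "\<alpha> \<in> K" "c \<le> cond_entropy M \<alpha> (join_n M as n)" using big[OF J] by blast
  define bs where "bs = as(n := \<alpha>)"
  have "join_n M bs n = join_n M as n" by (rule join_n_cong) (simp add: bs_def)
  then have "part_entropy M (join_n M bs (Suc n))
      = part_entropy M (join_n M as n) + cond_entropy M \<alpha> (join_n M as n)"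
    using part_entropy_part_join[OF K[OF \<alpha>(1)] J] by (simp add: join_n_Suc bs_def part_join_commute)
  moreover have "\<forall>i<Suc n. bs i \<in> K" using as(1) \<alpha>(1) by (simp add: bs_def less_Suc_eq)
  ultimately show ?case using as(2) \<alpha>(2) by (intro exI[of _ bs]) (simp add: algebra_simps)
qed

lemma max_pattern_entropy_ge_if_cond_entropy_bounded_below:
  assumes K: "\<And>\<alpha>. \<alpha> \<in> K \<Longrightarrow> measurable_partition M \<alpha>" and c: "0 \<le> c"
    and big: "\<And>Q. measurable_partition M Q \<Longrightarrow> \<exists>\<alpha>\<in>K. c \<le> cond_entropy M \<alpha> Q"
  shows "ennreal c \<le> max_pattern_entropy M K"
  unfolding max_pattern_entropy_def
proof (rule limsup_div_ge_if_linear_lower_bound[OF c])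
  fix n
  obtain as where "\<forall>i<n. as i \<in> K" "real n * c \<le> part_entropy M (join_n M as n)"
    using exists_join_n_entropy_ge[OF K big] by blast
  then show "ennreal (real n * c) \<le> pattern_sup M K n"
    unfolding pattern_sup_def by (intro SUP_upper2[of as]) (auto intro: ennreal_leI)
qed

lemma rokhlin_precompact_if_max_pattern_entropy_eq_0:
  assumes K: "K \<subseteq> partitions_le M r" and "max_pattern_entropy M K = 0"
  shows "rokhlin_precompact M K"
proof (rule ccontr)
  assume "\<not> rokhlin_precompact M K"
  then obtain c where "0 < c" and big: "\<And>Q. measurable_partition M Q \<Longrightarrow> \<exists>\<alpha>\<in>K. c \<le> cond_entropy M \<alpha> Q"
    using cond_entropy_bounded_below_if_not_precompact[OF K] by blast
  have "\<And>\<alpha>. \<alpha> \<in> K \<Longrightarrow> measurable_partition M \<alpha>"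
    using K partitions_leD(1) by blast
  then have "ennreal c \<le> max_pattern_entropy M K"
    using \<open>0 < c\<close> big by (intro max_pattern_entropy_ge_if_cond_entropy_bounded_below) auto
  then show False using \<open>0 < c\<close> \<open>max_pattern_entropy M K = 0\<close> by simp
qed

end

theorem proposition3p1:
  fixes M :: "'a::polish_space measure" and r :: nat and K :: "'a set set set"
  assumes "prob_space M" and "sets M = sets borel" and "r \<ge> 2"
    and "K \<subseteq> partitions_le M r"
  shows "rokhlin_precompact M K \<longleftrightarrow> max_pattern_entropy M K = 0"
proof -
  interpret prob_space M by fact
  have "\<And>\<alpha>. \<alpha> \<in> K \<Longrightarrow> measurable_partition M \<alpha>"
    using assms(4) partitions_leD(1) by blast
  then show ?thesis
    using max_pattern_entropy_eq_0_if_precompact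
      rokhlin_precompact_if_max_pattern_entropy_eq_0[OF assms(4)] by blast
qed

end
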